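(* For every finite alphabet $\Sigma$, every word $x\in\Sigma^*$ and every $\varepsilon>0$, there is a 3-state AfA that accepts $x$ with probability $1$ and accepts every word $z\in\Sigma^*$ with $z\neq x$ with probability at most $\varepsilon$.
   Context: An $n$-state affine finite automaton (AfA) over $\Sigma$ consists of real $n\times n$ matrices $A_\sigma$ for $\sigma\in\Sigma\cup\{\$\}$ ($\$$ a right end-marker), each of whose columns sums to $1$; an initial vector $v_0\in\mathbb{R}^n$ with entries summing to $1$; and a set $E_a$ of accepting states. On input $w=w_1\cdots w_k$ the final vector is $v_f=A_\$A_{w_k}\cdots A_{w_1}v_0$, and $w$ is accepted with probability $\sum_{j\in E_a}|v_f[j]|\big/\sum_{j=1}^n|v_f[j]|$. *)

theory Defs
  imports "HOL-Analysis.Analysis"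
begin

record ('a, 'n) afa =
  trans :: "'a \<Rightarrow> real ^ 'n ^ 'n"
  endmark :: "real ^ 'n ^ 'n"
  init :: "real ^ 'n"
  acc :: "'n set"

definition col_stochastic :: "real ^ 'n ^ 'n \<Rightarrow> bool" where
  "col_stochastic A \<longleftrightarrow> (\<forall>j. (\<Sum>i\<in>UNIV. A $ i $ j) = 1)"

definition is_afa :: "('a, 'n::finite) afa \<Rightarrow> bool" where
  "is_afa M \<longleftrightarrow> (\<forall>\<sigma>. col_stochastic (trans M \<sigma>)) \<and> col_stochastic (endmark M)
     \<and> (\<Sum>i\<in>UNIV. init M $ i) = 1"

definition final_vec :: "('a, 'n::finite) afa \<Rightarrow> 'a list \<Rightarrow> real ^ 'n" where
  "final_vec M w = endmark M *v foldl (\<lambda>v \<sigma>. trans M \<sigma> *v v) (init M) w"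

definition accept_prob :: "('a, 'n::finite) afa \<Rightarrow> 'a list \<Rightarrow> real" where
  "accept_prob M w =
     (\<Sum>j\<in>acc M. \<bar>final_vec M w $ j\<bar>) / (\<Sum>j\<in>UNIV. \<bar>final_vec M w $ j\<bar>)"

end

theory Submission
  imports Defs
begin

text \<open>Read a word w as a number N(w) in base B with nonzero digits d(s) < B, so that distinct
words get distinct integers.  Three states suffice to carry the affine state (1 - r, r, 0)
with r = N(w): each letter acts as r \<mapsto> B r + d(s).  The end-marker moves this to
(1, -K (r - N(x)), K (r - N(x))), whose acceptance probability in state 1 is
1 / (1 + 2 K |N(w) - N(x)|); it equals 1 for w = x and is at most 1 / (1 + 2 K) otherwise.\<close>

definition radix_value :: "'b::semiring_1 \<Rightarrow> ('a \<Rightarrow> 'b) \<Rightarrow> 'a list \<Rightarrow> 'b" where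
  "radix_value B d w = foldl (\<lambda>n s. B * n + d s) 0 w"

lemma radix_value_Nil [simp]: "radix_value B d [] = 0"
  by (simp add: radix_value_def)

lemma radix_value_snoc [simp]: "radix_value B d (w @ [s]) = B * radix_value B d w + d s"
  by (simp add: radix_value_def)

lemma radix_value_of_nat:
  "radix_value (of_nat B) (\<lambda>s. of_nat (d s)) w = of_nat (radix_value B d w)"
  by (induction w rule: rev_induct) simp_all

lemma radix_value_eq_iff:
  fixes d :: "'a \<Rightarrow> nat"
  assumes digit: "\<And>s. 0 < d s \<and> d s < B" and "inj d"
  shows "radix_value B d w = radix_value B d z \<longleftrightarrow> w = z"
proof
  have pos: "radix_value B d (v @ [s]) > 0" for v s
    using digit[of s] by simp
  have mod_B: "radix_value B d (v @ [s]) mod B = d s" for v s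
    using digit[of s] by simp
  have div_B: "radix_value B d (v @ [s]) div B = radix_value B d v" for v s
    using digit[of s] by simp
  show "radix_value B d w = radix_value B d z \<Longrightarrow> w = z"
  proof (induction w arbitrary: z rule: rev_induct)
    case Nil
    then show ?case
      by (cases z rule: rev_exhaust) (metis pos less_irrefl radix_value_Nil)+
  next
    case (snoc s w)
    then obtain v t where z: "z = v @ [t]"
      by (cases z rule: rev_exhaust) (metis pos less_irrefl radix_value_Nil)+
    have "d s = d t" and "radix_value B d w = radix_value B d v"
      using mod_B[of w s] mod_B[of v t] div_B[of w s] div_B[of v t] snoc.prems z by simp_all
    then show ?case
      using snoc.IH \<open>inj d\<close> z by (simp add: inj_eq)
  qed
qed simp

definition affine_state :: "real \<Rightarrow> real ^ 3" where
  "affine_state r = (\<chi> i. if i = 1 then 1 - r else if i = 2 then r else 0)"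

definition digit_step :: "real \<Rightarrow> real \<Rightarrow> real ^ 3 ^ 3" where
  "digit_step B c = (\<chi> i j.
     if j = 1 then (if i = 1 then 1 - c else if i = 2 then c else 0)
     else if j = 2 then (if i = 1 then 1 - B - c else if i = 2 then B + c else 0)
     else (if i = 1 then 1 else 0))"

definition distance_readout :: "real \<Rightarrow> real \<Rightarrow> real ^ 3 ^ 3" where
  "distance_readout K X = (\<chi> i j.
     if j = 3 then (if i = 1 then 1 else 0)
     else if i = 1 then 1
     else if i = 2 then - K * ((if j = 2 then 1 else 0) - X)
     else K * ((if j = 2 then 1 else 0) - X))"

lemma col_stochastic_digit_step: "col_stochastic (digit_step B c)"
  unfolding digit_step_def col_stochastic_def by (simp add: sum_3 forall_3)

lemma col_stochastic_distance_readout: "col_stochastic (distance_readout K X)"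
  unfolding distance_readout_def col_stochastic_def by (simp add: sum_3 forall_3)

lemma digit_step_affine_state:
  "digit_step B c *v affine_state r = affine_state (B * r + c)"
  unfolding digit_step_def affine_state_def
  by (simp add: vec_eq_iff matrix_vector_mult_def sum_3 forall_3 algebra_simps)

lemma distance_readout_affine_state:
  "distance_readout K X *v affine_state r
     = (\<chi> i. if i = 1 then 1 else if i = 2 then - K * (r - X) else K * (r - X))"
  unfolding distance_readout_def affine_state_def
  by (simp add: vec_eq_iff matrix_vector_mult_def sum_3 forall_3 algebra_simps)

lemma foldl_digit_step:
  "foldl (\<lambda>v s. digit_step B (c s) *v v) (affine_state 0) w = affine_state (radix_value B c w)"
  by (induction w rule: rev_induct) (simp_all add: digit_step_affine_state)

definition radix_afa :: "nat \<Rightarrow> ('a \<Rightarrow> nat) \<Rightarrow> real \<Rightarrow> real \<Rightarrow> ('a, 3) afa" where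
  "radix_afa B d K X = \<lparr>trans = \<lambda>s. digit_step (real B) (real (d s)),
     endmark = distance_readout K X, init = affine_state 0, acc = {1}\<rparr>"

lemma is_afa_radix_afa: "is_afa (radix_afa B d K X)"
  by (simp add: is_afa_def radix_afa_def col_stochastic_digit_step
      col_stochastic_distance_readout affine_state_def sum_3)

lemma accept_prob_radix_afa:
  assumes "K \<ge> 0"
  shows "accept_prob (radix_afa B d K X) w = 1 / (1 + 2 * K * \<bar>real (radix_value B d w) - X\<bar>)"
proof -
  have "final_vec (radix_afa B d K X) w
     = (\<chi> i. if i = 1 then 1 else if i = 2 then - K * (real (radix_value B d w) - X)
             else K * (real (radix_value B d w) - X))"
    by (simp add: final_vec_def radix_afa_def foldl_digit_step radix_value_of_nat
        distance_readout_affine_state)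
  then show ?thesis
    using assms by (simp add: accept_prob_def radix_afa_def sum_3 abs_mult)
qed

theorem mainTheorem11:
  fixes x :: "'a::finite list" and \<epsilon> :: real
  assumes "\<epsilon> > 0"
  shows "\<exists>M :: ('a, 3) afa. is_afa M \<and> accept_prob M x = 1
           \<and> (\<forall>z. z \<noteq> x \<longrightarrow> accept_prob M z \<le> \<epsilon>)"
proof -
  obtain f :: "'a \<Rightarrow> nat" and n where f: "f ` UNIV = {i. i < n}" "inj f"
    using finite_imp_inj_to_nat_seg[of "UNIV :: 'a set"] by auto
  define d where "d s = f s + 1" for s
  have digit: "0 < d s \<and> d s < n + 1" for s
    using f(1) by (auto simp: d_def)
  have "inj d"
    using f(2) by (auto simp: d_def inj_def)
  define K where "K = 1 / \<epsilon>"
  have "K > 0"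
    using assms by (simp add: K_def)
  define M where "M = radix_afa (n + 1) d K (radix_value (n + 1) d x)"
  have "accept_prob M z \<le> \<epsilon>" if "z \<noteq> x" for z
  proof -
    have "radix_value (n + 1) d z \<noteq> radix_value (n + 1) d x"
      using radix_value_eq_iff[OF digit \<open>inj d\<close>] that by blast
    then have "1 \<le> \<bar>real (radix_value (n + 1) d z) - real (radix_value (n + 1) d x)\<bar>"
      by linarith
    then have "accept_prob M z \<le> 1 / (1 + 2 * K)"
      using \<open>K > 0\<close> by (simp add: M_def accept_prob_radix_afa frac_le)
    also have "\<dots> \<le> \<epsilon>"
      using assms by (simp add: K_def field_simps)
    finally show ?thesis .
  qed
  moreover have "accept_prob M x = 1"
    using \<open>K > 0\<close> by (simp add: M_def accept_prob_radix_afa)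
  ultimately show ?thesis
    using is_afa_radix_afa M_def by blast
qed

end
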